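(* For every $k\ge1$, the derived subgroup $B_k'$ is contained in $G_k$, i.e. $B_k'\le G_k$.
   Context: Let $C_2=\{e,\sigma\}$ with $\sigma=(1,2)$. Define $B_1=C_2$ and $B_k=B_{k-1}\wr C_2$ for $k>1$, with elements written as wreath recursions $(g_1,g_2)\pi$, $g_1,g_2\in B_{k-1}$, $\pi\in C_2$, and multiplication $(g_1,g_2)\pi\cdot(h_1,h_2)\rho=(g_1h_{\pi(1)},g_2h_{\pi(2)})\pi\rho$ (so $B_k$ is the group of automorphisms of the binary rooted tree with $k$ levels, $B_k\cong\mathrm{Syl}_2 S_{2^k}$). Define $G_1=\{e\}$ and, for $k>1$, $G_k=\{(g_1,g_2)\pi\in B_k : g_1g_2\in G_{k-1}\}$. *)

theory Defs
  imports "HOL-Algebra.Algebra"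
begin

text \<open>Automorphisms of the binary rooted tree, as wreath recursions (portraits).
  Lf is the unique element of the trivial group B_0; Nd g1 g2 p is (g1,g2)pi,
  where p = True means pi = sigma (the swap) and p = False means pi = e.\<close>
datatype aut = Lf | Nd aut aut bool

text \<open>Wreath multiplication (g1,g2)pi * (h1,h2)rho = (g1 h_pi(1), g2 h_pi(2)) pi rho.\<close>
fun amul :: "aut \<Rightarrow> aut \<Rightarrow> aut" where
  "amul (Nd g1 g2 p) (Nd h1 h2 q) =
     Nd (amul g1 (if p then h2 else h1)) (amul g2 (if p then h1 else h2)) (p \<noteq> q)"
| "amul _ _ = Lf"

fun aid :: "nat \<Rightarrow> aut" where
  "aid 0 = Lf"
| "aid (Suc k) = Nd (aid k) (aid k) False"

text \<open>B k: automorphisms of the binary tree with k levels (B_0 trivial, B_1 = C_2,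
  B_k = B_(k-1) wr C_2).\<close>
fun Bset :: "nat \<Rightarrow> aut set" where
  "Bset 0 = {Lf}"
| "Bset (Suc k) = {Nd g1 g2 p | g1 g2 p. g1 \<in> Bset k \<and> g2 \<in> Bset k}"

definition Bgrp :: "nat \<Rightarrow> aut monoid" where
  "Bgrp k = \<lparr>carrier = Bset k, monoid.mult = amul, one = aid k\<rparr>"

text \<open>G_1 = {e}; G_k = {(g1,g2)pi in B_k : g1 g2 in G_(k-1)} for k > 1.
  (G 0 is an irrelevant filler value.)\<close>
fun Gset :: "nat \<Rightarrow> aut set" where
  "Gset 0 = {Lf}"
| "Gset (Suc 0) = {aid 1}"
| "Gset (Suc (Suc k)) =
     {Nd g1 g2 p | g1 g2 p. g1 \<in> Bset (Suc k) \<and> g2 \<in> Bset (Suc k) \<and> amul g1 g2 \<in> Gset (Suc k)}"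

end

theory Submission
  imports Defs
begin

text \<open>Let the bottom parity of g \<in> B_k be the parity of the number of vertices on the lowest
  level of the tree at which g swaps the two children. Multiplying by h only permutes the
  bottom-level vertices of h, so the bottom parity is a homomorphism from B_k onto
  the abelian group C_2. Unwinding the recursive definition, G_k is exactly its kernel,
  and the derived subgroup lies in the kernel of every homomorphism to an abelian group.\<close>

lemma (in group_hom) derived_subset_kernel:
  assumes "comm_group H" shows "derived G (carrier G) \<subseteq> kernel G H h"
proof -
  have "h ` derived G (carrier G) = derived H (h ` carrier G)"
    by (simp add: derived_img)
  also have "\<dots> = {\<one>\<^bsub>H\<^esub>}"
    using comm_group.derived_eq_singleton[OF assms] hom_closed by blast
  finally show ?thesis
    using G.derived_in_carrier[of "carrier G"] by (auto simp: kernel_def)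
qed

fun aut_inv :: "aut \<Rightarrow> aut" where
  "aut_inv (Nd g1 g2 p) = Nd (aut_inv (if p then g2 else g1)) (aut_inv (if p then g1 else g2)) p"
| "aut_inv Lf = Lf"

lemma amul_in_Bset: "g \<in> Bset k \<Longrightarrow> h \<in> Bset k \<Longrightarrow> amul g h \<in> Bset k"
  by (induction k arbitrary: g h) auto

lemma aid_in_Bset: "aid k \<in> Bset k"
  by (induction k) auto

lemma aut_inv_in_Bset: "g \<in> Bset k \<Longrightarrow> aut_inv g \<in> Bset k"
  by (induction k arbitrary: g) auto

lemma amul_aid_left: "g \<in> Bset k \<Longrightarrow> amul (aid k) g = g"
  by (induction k arbitrary: g) auto

lemma amul_aut_inv_left: "g \<in> Bset k \<Longrightarrow> amul (aut_inv g) g = aid k"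
  by (induction k arbitrary: g) auto

lemma amul_assoc: "g \<in> Bset k \<Longrightarrow> h \<in> Bset k \<Longrightarrow> f \<in> Bset k \<Longrightarrow>
    amul (amul g h) f = amul g (amul h f)"
  by (induction k arbitrary: g h f) auto

lemma group_Bgrp: "group (Bgrp k)"
  by (rule groupI)
    (auto simp: Bgrp_def amul_in_Bset aid_in_Bset amul_aid_left amul_assoc
      intro: aut_inv_in_Bset amul_aut_inv_left)

definition parity_group :: "bool monoid" where
  "parity_group = \<lparr>carrier = UNIV, monoid.mult = (\<noteq>), one = False\<rparr>"

lemma comm_group_parity_group: "comm_group parity_group"
  by (rule group.group_comm_groupI, rule groupI) (auto simp: parity_group_def)

fun bottom_parity :: "nat \<Rightarrow> aut \<Rightarrow> bool" where
  "bottom_parity (Suc 0) (Nd _ _ p) = p"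
| "bottom_parity (Suc (Suc k)) (Nd g1 g2 _) = (bottom_parity (Suc k) g1 \<noteq> bottom_parity (Suc k) g2)"
| "bottom_parity _ _ = False"

lemma bottom_parity_amul:
  "g \<in> Bset (Suc k) \<Longrightarrow> h \<in> Bset (Suc k) \<Longrightarrow>
    bottom_parity (Suc k) (amul g h) = (bottom_parity (Suc k) g \<noteq> bottom_parity (Suc k) h)"
proof (induction k arbitrary: g h)
  case 0
  then show ?case by auto
next
  case (Suc k)
  then obtain g1 g2 p h1 h2 q where "g = Nd g1 g2 p" "h = Nd h1 h2 q"
    and "g1 \<in> Bset (Suc k)" "g2 \<in> Bset (Suc k)" "h1 \<in> Bset (Suc k)" "h2 \<in> Bset (Suc k)"
    by (auto simp del: Bset.simps simp: Bset.simps(2)[of "Suc k"])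
  with Suc.IH show ?case
    by (auto simp del: Bset.simps)
qed

lemma bottom_parity_hom:
  assumes "k \<ge> 1" shows "bottom_parity k \<in> hom (Bgrp k) parity_group"
proof -
  obtain j where "k = Suc j" using assms by (cases k) auto
  then show ?thesis
    by (auto intro!: homI simp: Bgrp_def parity_group_def bottom_parity_amul)
qed

lemma Gset_Suc_eq: "Gset (Suc k) = {g \<in> Bset (Suc k). \<not> bottom_parity (Suc k) g}"
proof (induction k)
  case 0
  show ?case by auto
next
  case (Suc k)
  then show ?case
    by (auto simp del: Bset.simps simp: bottom_parity_amul amul_in_Bset Bset.simps(2)[of "Suc k"])
qed

lemma Gset_eq_kernel:
  assumes "k \<ge> 1" shows "Gset k = kernel (Bgrp k) parity_group (bottom_parity k)"
  using assms Gset_Suc_eq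
  by (cases k) (auto simp: kernel_def Bgrp_def parity_group_def simp del: Gset.simps Bset.simps)

theorem mainTheorem9:
  fixes k :: nat
  assumes "k \<ge> 1"
  shows "derived (Bgrp k) (carrier (Bgrp k)) \<subseteq> Gset k"
proof -
  interpret group_hom "Bgrp k" parity_group "bottom_parity k"
    using group_Bgrp comm_group_parity_group bottom_parity_hom[OF assms]
    by (simp add: group_hom_def group_hom_axioms_def comm_group.axioms(2))
  show ?thesis
    using derived_subset_kernel[OF comm_group_parity_group] Gset_eq_kernel[OF assms] by simp
qed

end
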